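(* For every weak composition $a$, $\mathfrak{F}_a=\sum_{S\in\mathfrak{F}\mathrm{SSF}(a)}x^{\mathrm{wt}(S)}$.
   Context: Weak composition of length $n$: sequence of $n$ nonnegative integers; $\mathrm{flat}(a)$ deletes zero parts; $b\ge a$ means $b_1+\cdots+b_i\ge a_1+\cdots+a_i$ for all $i$. $\mathfrak{F}_a=\sum x^b$ over weak compositions $b$ of length $n$ with $b\ge a$ and $\mathrm{flat}(b)$ refining $\mathrm{flat}(a)$ (i.e. $\mathrm{flat}(a)$ is obtained by summing consecutive parts of $\mathrm{flat}(b)$). $D(a)$: $a_i$ left-justified boxes in row $i$, row 1 lowest. For a filling $S$, $\mathrm{wt}(S)_i$ is the number of entries $i$. Triples (rows $r<s$): Type A: $\gamma=(r,c),\alpha=(r,c+1),\beta=(s,c+1)$ with $a_r\ge a_s$; Type B: $\gamma=(s,c),\alpha=(s,c+1),\beta=(r,c)$ with $a_s>a_r$; inversion triple: $\beta>\gamma\ge\alpha$ or $\gamma\ge\alpha>\beta$. A semi-skyline filling of $D(a)$: positive integer entries, rows weakly decreasing left to right, distinct entries in each column, all triples inversion triples. $\mathfrak{F}\mathrm{SSF}(a)$: semi-skyline fillings of $D(a)$ in which each first-column entry is at most its row index and, whenever box $B$ is in a higher row than box $B'$, the entry of $B$ is strictly larger than that of $B'$. *)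

theory Defs
  imports Main
begin

text \<open>A weak composition of length n is a list a of naturals with length a = n;
  its i-th part (1-based) is a ! (i - 1).\<close>

definition flat :: "nat list \<Rightarrow> nat list" where
  "flat a = filter (\<lambda>x. x \<noteq> 0) a"

definition refines :: "nat list \<Rightarrow> nat list \<Rightarrow> bool" where
  "refines p q \<longleftrightarrow> (\<exists>blocks. (\<forall>bl\<in>set blocks. bl \<noteq> []) \<and> concat blocks = p
                                 \<and> map sum_list blocks = q)"

definition dom_ge :: "nat list \<Rightarrow> nat list \<Rightarrow> bool" where
  "dom_ge b a \<longleftrightarrow> (\<forall>i \<le> length a. sum_list (take i a) \<le> sum_list (take i b))"

text \<open>Exponent vectors of the monomials of the fundamental slide polynomial F_a.\<close>
definition slide_exps :: "nat list \<Rightarrow> nat list set" where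
  "slide_exps a = {b. length b = length a \<and> dom_ge b a \<and> refines (flat b) (flat a)}"

text \<open>Boxes of D(a): (r, c) with row r (1 = lowest) and column c, both 1-based.\<close>
definition cells :: "nat list \<Rightarrow> (nat \<times> nat) set" where
  "cells a = {(r, c). 1 \<le> r \<and> r \<le> length a \<and> 1 \<le> c \<and> c \<le> a ! (r - 1)}"

definition filling :: "nat list \<Rightarrow> (nat \<times> nat \<Rightarrow> nat) \<Rightarrow> bool" where
  "filling a S \<longleftrightarrow> (\<forall>x \<in> cells a. S x > 0) \<and> (\<forall>x. x \<notin> cells a \<longrightarrow> S x = 0)"

definition wt :: "nat list \<Rightarrow> (nat \<times> nat \<Rightarrow> nat) \<Rightarrow> nat list" where
  "wt a S = map (\<lambda>i. card {x \<in> cells a. S x = i}) [1..<length a + 1]"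

definition inversion_triple :: "nat \<Rightarrow> nat \<Rightarrow> nat \<Rightarrow> bool" where
  "inversion_triple \<gamma> \<alpha> \<beta> \<longleftrightarrow> (\<beta> > \<gamma> \<and> \<gamma> \<ge> \<alpha>) \<or> (\<gamma> \<ge> \<alpha> \<and> \<alpha> > \<beta>)"

definition triples_ok :: "nat list \<Rightarrow> (nat \<times> nat \<Rightarrow> nat) \<Rightarrow> bool" where
  "triples_ok a S \<longleftrightarrow>
     (\<forall>r s c. 1 \<le> r \<and> r < s \<and> s \<le> length a \<and> 1 \<le> c \<longrightarrow>
        ((a ! (r - 1) \<ge> a ! (s - 1) \<and> (r, c) \<in> cells a \<and> (r, c + 1) \<in> cells a \<and> (s, c + 1) \<in> cells a
            \<longrightarrow> inversion_triple (S (r, c)) (S (r, c + 1)) (S (s, c + 1))) \<and>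
         (a ! (s - 1) > a ! (r - 1) \<and> (s, c) \<in> cells a \<and> (s, c + 1) \<in> cells a \<and> (r, c) \<in> cells a
            \<longrightarrow> inversion_triple (S (s, c)) (S (s, c + 1)) (S (r, c)))))"

definition semi_skyline :: "nat list \<Rightarrow> (nat \<times> nat \<Rightarrow> nat) \<Rightarrow> bool" where
  "semi_skyline a S \<longleftrightarrow> filling a S
     \<and> (\<forall>r c. (r, c) \<in> cells a \<and> (r, c + 1) \<in> cells a \<longrightarrow> S (r, c + 1) \<le> S (r, c))
     \<and> (\<forall>r s c. (r, c) \<in> cells a \<and> (s, c) \<in> cells a \<and> r \<noteq> s \<longrightarrow> S (r, c) \<noteq> S (s, c))
     \<and> triples_ok a S"

definition FSSF :: "nat list \<Rightarrow> (nat \<times> nat \<Rightarrow> nat) set" where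
  "FSSF a = {S. semi_skyline a S
     \<and> (\<forall>r. (r, 1) \<in> cells a \<longrightarrow> S (r, 1) \<le> r)
     \<and> (\<forall>B \<in> cells a. \<forall>B' \<in> cells a. fst B > fst B' \<longrightarrow> S B > S B')}"

text \<open>Polynomials in x_1..x_n with nat coefficients, represented by their coefficient
  function on exponent vectors: the generating function of a set A with weight w.\<close>
definition genfun :: "'s set \<Rightarrow> ('s \<Rightarrow> nat list) \<Rightarrow> (nat list \<Rightarrow> nat)" where
  "genfun A w = (\<lambda>m. card {s \<in> A. w s = m})"

end

theory Submission
  imports Defs
begin

text \<open>Read the boxes of D(a) row by row from the bottom, each row from right to left.
  In a filling \<open>S \<in> FSSF(a)\<close> rows weakly decrease to the right and entries increase
  strictly from row to row, so the entries weakly increase in this reading order: with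
  \<open>b = wt(S)\<close>, the filling consists of \<open>b\<^sub>1\<close> ones, then \<open>b\<^sub>2\<close> twos, and so on,
  written into the boxes in reading order.  Hence \<open>S \<mapsto> wt(S)\<close> is injective.  Conversely,
  writing an arbitrary \<open>b\<close> into D(a) in this way makes entries increase strictly from
  row to row exactly when every row boundary of \<open>a\<close> (a partial sum of \<open>a\<close>) is a partial
  sum of \<open>b\<close>, i.e. when \<open>flat(b)\<close> refines \<open>flat(a)\<close>, and it respects the first-column
  bound exactly when \<open>b \<ge> a\<close>.  So \<open>wt\<close> is a bijection from \<open>FSSF(a)\<close> onto the exponents
  of the monomials of \<open>F\<^sub>a\<close>.\<close>

lemma sum_list_take_mono:
  fixes xs :: "nat list"
  assumes "i \<le> j"
  shows "sum_list (take i xs) \<le> sum_list (take j xs)"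
proof -
  have "take j xs = take i xs @ drop i (take j xs)"
    using assms by (metis append_take_drop_id min.absorb1 take_take)
  then show ?thesis by (metis le_add1 sum_list_append)
qed

lemma sum_list_take_Suc:
  "i < length xs \<Longrightarrow> sum_list (take (Suc i) xs) = sum_list (take i xs) + xs ! i"
  by (simp add: take_Suc_conv_app_nth)

lemma sum_list_take_strict_mono:
  fixes xs :: "nat list"
  assumes "0 \<notin> set xs" "i < j" "j \<le> length xs"
  shows "sum_list (take i xs) < sum_list (take j xs)"
proof -
  have "xs ! i \<noteq> 0" using assms by (metis nth_mem order.strict_trans2)
  then have "sum_list (take i xs) < sum_list (take (Suc i) xs)"
    using assms by (simp add: sum_list_take_Suc)
  also have "\<dots> \<le> sum_list (take j xs)" using assms by (intro sum_list_take_mono) simp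
  finally show ?thesis .
qed

lemma list_eq_if_sum_list_take_eq:
  fixes xs ys :: "'a::cancel_comm_monoid_add list"
  assumes "length xs = length ys"
    and "\<And>i. i \<le> length xs \<Longrightarrow> sum_list (take i xs) = sum_list (take i ys)"
  shows "xs = ys"
proof (rule nth_equalityI)
  fix i assume "i < length xs"
  then have "sum_list (take i xs) + xs ! i = sum_list (take i ys) + ys ! i"
    using assms sum_list_take_Suc[of i xs] sum_list_take_Suc[of i ys] by simp
  then show "xs ! i = ys ! i"
    using assms \<open>i < length xs\<close> by simp
qed (rule assms(1))


subsection \<open>Refinement via partial sums\<close>

definition partial_sums :: "nat list \<Rightarrow> nat set" where
  "partial_sums xs = range (\<lambda>i. sum_list (take i xs))"

lemma partial_sums_iff:
  "z \<in> partial_sums xs \<longleftrightarrow> (\<exists>i \<le> length xs. z = sum_list (take i xs))"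
proof
  assume "z \<in> partial_sums xs"
  then obtain i where "z = sum_list (take i xs)" unfolding partial_sums_def by blast
  then show "\<exists>i \<le> length xs. z = sum_list (take i xs)"
    by (intro exI[of _ "min i (length xs)"]) (simp add: min_def)
qed (auto simp: partial_sums_def)

lemma zero_in_partial_sums: "0 \<in> partial_sums xs"
  unfolding partial_sums_def by (rule range_eqI[of _ _ 0]) simp

lemma sum_list_in_partial_sums: "sum_list xs \<in> partial_sums xs"
  unfolding partial_sums_def by (rule range_eqI[of _ _ "length xs"]) simp

lemma partial_sums_Cons: "partial_sums (y # xs) = insert 0 ((+) y ` partial_sums xs)"
  unfolding partial_sums_def
proof (intro equalityI subsetI)
  fix z assume "z \<in> range (\<lambda>i. sum_list (take i (y # xs)))"
  then obtain i where "z = sum_list (take i (y # xs))" by blast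
  then show "z \<in> insert 0 ((+) y ` range (\<lambda>i. sum_list (take i xs)))" by (cases i) auto
next
  fix z assume "z \<in> insert 0 ((+) y ` range (\<lambda>i. sum_list (take i xs)))"
  then show "z \<in> range (\<lambda>i. sum_list (take i (y # xs)))"
    by (auto intro: range_eqI[of _ _ 0] range_eqI[of _ _ "Suc _"])
qed

lemma partial_sums_flat: "partial_sums (flat xs) = partial_sums xs"
  by (induction xs)
    (auto simp: flat_def partial_sums_Cons insert_absorb zero_in_partial_sums)

lemma sum_list_flat: "sum_list (flat xs) = sum_list xs"
  by (induction xs) (auto simp: flat_def)

lemma zero_notin_flat: "0 \<notin> set (flat xs)"
  by (simp add: flat_def)

lemma sum_list_concat: "sum_list (concat xss) = sum_list (map sum_list xss)"
  by (induction xss) auto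

lemma partial_sums_map_sum_list_subset:
  "partial_sums (map sum_list xss) \<subseteq> partial_sums (concat xss)"
proof (induction xss)
  case (Cons xs xss)
  have "(+) (sum_list xs) ` partial_sums ys \<subseteq> partial_sums (xs @ ys)" for ys
  proof
    fix z assume "z \<in> (+) (sum_list xs) ` partial_sums ys"
    then obtain i where "z = sum_list (take (length xs + i) (xs @ ys))"
      unfolding partial_sums_def by auto
    then show "z \<in> partial_sums (xs @ ys)" unfolding partial_sums_def by blast
  qed
  with Cons show ?case by (auto simp: partial_sums_Cons zero_in_partial_sums)
qed simp

text \<open>Induction on \<open>q\<close>: its first part \<open>x\<close> is a partial sum of \<open>p\<close>, which cuts off
  the first block of \<open>p\<close>; zero-freeness of \<open>p\<close> makes the remaining partial sums of \<open>q\<close>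
  partial sums of the rest of \<open>p\<close>.\<close>
lemma refines_iff_partial_sums:
  assumes "0 \<notin> set p" "0 \<notin> set q"
  shows "refines p q \<longleftrightarrow> partial_sums q \<subseteq> partial_sums p \<and> sum_list p = sum_list q"
proof
  show "refines p q \<Longrightarrow> partial_sums q \<subseteq> partial_sums p \<and> sum_list p = sum_list q"
    unfolding refines_def using partial_sums_map_sum_list_subset sum_list_concat by blast
next
  show "partial_sums q \<subseteq> partial_sums p \<and> sum_list p = sum_list q \<Longrightarrow> refines p q"
    using assms
  proof (induction q arbitrary: p)
    case Nil
    then have "p = []" by (cases p) auto
    then show ?case unfolding refines_def by simp
  next
    case (Cons x q p)
    have "x \<in> partial_sums p"
      using Cons.prems(1) zero_in_partial_sums by (auto simp: partial_sums_Cons)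
    then obtain i where x: "x = sum_list (take i p)" and i: "i \<le> length p"
      by (auto simp: partial_sums_iff)
    have "x \<noteq> 0" using Cons.prems(3) by auto
    then have "take i p \<noteq> []" using x by (metis sum_list.Nil)
    have "partial_sums q \<subseteq> partial_sums (drop i p)"
    proof
      fix y assume "y \<in> partial_sums q"
      then have "x + y \<in> partial_sums p" using Cons.prems(1) by (auto simp: partial_sums_Cons)
      then obtain k where k: "x + y = sum_list (take k p)" unfolding partial_sums_def by auto
      have "\<not> k < i"
        using sum_list_take_strict_mono[OF Cons.prems(2) _ i] x k by fastforce
      then have "take k p = take i p @ take (k - i) (drop i p)"
        by (metis le_add_diff_inverse not_less take_add)
      then have "y = sum_list (take (k - i) (drop i p))" using k x by simp
      then show "y \<in> partial_sums (drop i p)" unfolding partial_sums_def by blast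
    qed
    moreover have "sum_list (drop i p) = sum_list q"
      using Cons.prems(1) x by (metis add_left_cancel append_take_drop_id sum_list.Cons sum_list_append)
    ultimately obtain xss where "\<forall>xs\<in>set xss. xs \<noteq> []" "concat xss = drop i p" "map sum_list xss = q"
      using Cons.IH[of "drop i p"] Cons.prems(2,3) unfolding refines_def
      by (meson in_set_dropD list.set_intros(2))
    then show ?case unfolding refines_def
      using \<open>take i p \<noteq> []\<close> x by (intro exI[of _ "take i p # xss"]) simp
  qed
qed

lemma slide_exps_iff:
  "b \<in> slide_exps a \<longleftrightarrow> length b = length a \<and> dom_ge b a
     \<and> partial_sums a \<subseteq> partial_sums b \<and> sum_list b = sum_list a"
  unfolding slide_exps_def
  by (simp add: refines_iff_partial_sums[OF zero_notin_flat zero_notin_flat]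
      partial_sums_flat sum_list_flat)

lemma finite_slide_exps: "finite (slide_exps a)"
proof (rule finite_subset)
  show "slide_exps a \<subseteq> {b. set b \<subseteq> {..sum_list a} \<and> length b = length a}"
    by (auto simp: slide_exps_iff dest: member_le_sum_list)
qed (simp add: finite_lists_length_eq)

lemma genfun_bij_betw:
  assumes "bij_betw w A B"
  shows "genfun B id = genfun A w"
proof
  fix m
  have "bij_betw w {s \<in> A. w s = m} {s \<in> B. id s = m}"
    using assms by (auto simp: bij_betw_def inj_on_def)
  then show "genfun B id m = genfun A w m" unfolding genfun_def by (simp add: bij_betw_same_card)
qed


subsection \<open>The reading order on D(a)\<close>

definition reading_index :: "nat list \<Rightarrow> nat \<times> nat \<Rightarrow> nat" where
  "reading_index a x = sum_list (take (fst x - 1) a) + (a ! (fst x - 1) - snd x) + 1"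

lemma cellsD: "(r, c) \<in> cells a \<Longrightarrow> 1 \<le> r \<and> r \<le> length a \<and> 1 \<le> c \<and> c \<le> a ! (r - 1)"
  by (simp add: cells_def)

lemma finite_cells: "finite (cells a)"
proof (rule finite_subset)
  have "a ! (r - 1) \<le> sum_list a" if "1 \<le> r" "r \<le> length a" for r
    using that elem_le_sum_list[of "r - 1" a] by simp
  then show "cells a \<subseteq> {1..length a} \<times> {1..sum_list a}"
    by (fastforce simp: cells_def)
qed simp

lemma sum_list_take_row:
  "1 \<le> r \<Longrightarrow> r \<le> length a \<Longrightarrow> sum_list (take r a) = sum_list (take (r - 1) a) + a ! (r - 1)"
  using sum_list_take_Suc[of "r - 1" a] by simp

lemma reading_index_bounds:
  assumes "(r, c) \<in> cells a"
  shows "sum_list (take (r - 1) a) < reading_index a (r, c)"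
    and "reading_index a (r, c) \<le> sum_list (take r a)"
  using cellsD[OF assms] sum_list_take_row[of r a] by (auto simp: reading_index_def)

lemma reading_index_le_iff:
  assumes "x \<in> cells a"
  shows "reading_index a x \<le> sum_list (take i a) \<longleftrightarrow> fst x \<le> i"
proof -
  obtain r c where x: "x = (r, c)" by force
  show ?thesis
  proof
    assume le: "reading_index a x \<le> sum_list (take i a)"
    show "fst x \<le> i"
    proof (rule ccontr)
      assume "\<not> fst x \<le> i"
      then have "sum_list (take i a) \<le> sum_list (take (r - 1) a)"
        using x by (intro sum_list_take_mono) simp
      then show False using reading_index_bounds(1)[of r c a] assms x le by simp
    qed
  next
    assume "fst x \<le> i"
    then show "reading_index a x \<le> sum_list (take i a)"
      using reading_index_bounds(2)[of r c a] sum_list_take_mono[of r i a] assms x by simp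
  qed
qed

lemma inj_on_reading_index: "inj_on (reading_index a) (cells a)"
proof
  fix x y assume x: "x \<in> cells a" and y: "y \<in> cells a"
    and eq: "reading_index a x = reading_index a y"
  have "fst y \<le> fst x" "fst x \<le> fst y"
    using reading_index_le_iff[OF x, of "fst x"] reading_index_le_iff[OF y, of "fst x"]
      reading_index_le_iff[OF y, of "fst y"] reading_index_le_iff[OF x, of "fst y"] eq
    by simp_all
  then have "fst x = fst y" by simp
  with eq x y show "x = y"
    by (cases x, cases y) (auto simp: reading_index_def dest!: cellsD)
qed

lemma reading_index_image: "reading_index a ` cells a = {1..sum_list a}"
proof
  show "reading_index a ` cells a \<subseteq> {1..sum_list a}"
  proof
    fix k assume "k \<in> reading_index a ` cells a"
    then obtain r c where rc: "(r, c) \<in> cells a" "k = reading_index a (r, c)" by force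
    then have "k \<le> sum_list (take r a)" using reading_index_bounds(2) by blast
    also have "\<dots> \<le> sum_list a" using sum_list_take_mono[of r "length a" a] cellsD[OF rc(1)] by simp
    finally show "k \<in> {1..sum_list a}" using rc(2) by (simp add: reading_index_def)
  qed
next
  show "{1..sum_list a} \<subseteq> reading_index a ` cells a"
  proof
    fix k assume k: "k \<in> {1..sum_list a}"
    let ?P = "\<lambda>r. k \<le> sum_list (take r a)"
    define r where "r = (LEAST r. ?P r)"
    have "?P (length a)" using k by simp
    then have "?P r" "r \<le> length a" unfolding r_def by (rule LeastI, rule Least_le)
    moreover have "r \<noteq> 0" using \<open>?P r\<close> k by (intro notI) simp
    moreover have "\<not> ?P (r - 1)"
      using \<open>r \<noteq> 0\<close> Least_le[of ?P "r - 1"] unfolding r_def by fastforce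
    ultimately have "(r, sum_list (take r a) - k + 1) \<in> cells a"
      and "reading_index a (r, sum_list (take r a) - k + 1) = k"
      using sum_list_take_row[of r a] by (auto simp: cells_def reading_index_def)
    then show "k \<in> reading_index a ` cells a" by force
  qed
qed

lemma card_cells: "card (cells a) = sum_list a"
  using card_image[OF inj_on_reading_index[of a]] reading_index_image[of a] by simp

lemma reading_index_range: "x \<in> cells a \<Longrightarrow> 1 \<le> reading_index a x \<and> reading_index a x \<le> sum_list a"
  using reading_index_image[of a] by auto

lemma card_reading_index_le:
  "card {x \<in> cells a. reading_index a x \<le> k} = min k (sum_list a)"
proof -
  have "reading_index a ` {x \<in> cells a. reading_index a x \<le> k} = reading_index a ` cells a \<inter> {..k}"
    by auto
  also have "\<dots> = {1..min k (sum_list a)}" by (auto simp: reading_index_image)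
  finally have "reading_index a ` {x \<in> cells a. reading_index a x \<le> k} = {1..min k (sum_list a)}" .
  moreover have "inj_on (reading_index a) {x \<in> cells a. reading_index a x \<le> k}"
    using inj_on_reading_index by (rule inj_on_subset) auto
  ultimately show ?thesis using card_image by fastforce
qed

lemma reading_downset_eq:
  assumes L: "L \<subseteq> cells a"
    and down: "\<And>x y. x \<in> L \<Longrightarrow> y \<in> cells a \<Longrightarrow> reading_index a y \<le> reading_index a x \<Longrightarrow> y \<in> L"
  shows "L = {x \<in> cells a. reading_index a x \<le> card L}"
proof (rule card_subset_eq)
  have fin: "finite L" using L finite_cells finite_subset by blast
  show "L \<subseteq> {x \<in> cells a. reading_index a x \<le> card L}"
  proof
    fix x assume x: "x \<in> L"
    have "{y \<in> cells a. reading_index a y \<le> reading_index a x} \<subseteq> L" using down x by blast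
    then have "min (reading_index a x) (sum_list a) \<le> card L"
      using card_mono[OF fin] card_reading_index_le by metis
    then show "x \<in> {x \<in> cells a. reading_index a x \<le> card L}"
      using x L reading_index_range[of x a] by auto
  qed
  have "card L \<le> sum_list a" using card_mono[OF finite_cells L] card_cells by metis
  then show "card L = card {x \<in> cells a. reading_index a x \<le> card L}"
    by (simp add: card_reading_index_le)
qed (simp add: finite_cells)


subsection \<open>Fillings in FSSF(a) are determined by their weight\<close>

lemma length_wt: "length (wt a S) = length a"
  by (simp add: wt_def del: upt_Suc)

lemma nth_wt: "v < length a \<Longrightarrow> wt a S ! v = card {x \<in> cells a. S x = Suc v}"
  by (simp add: wt_def nth_upt del: upt_Suc)

lemma sum_list_take_wt:
  assumes "filling a S" "v \<le> length a"
  shows "sum_list (take v (wt a S)) = card {x \<in> cells a. S x \<le> v}"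
  using assms(2)
proof (induction v)
  case 0
  have "{x \<in> cells a. S x \<le> 0} = {}" using assms(1) by (auto simp: filling_def)
  then show ?case by (simp only: take0 sum_list.Nil card.empty)
next
  case (Suc v)
  have "{x \<in> cells a. S x \<le> Suc v} = {x \<in> cells a. S x \<le> v} \<union> {x \<in> cells a. S x = Suc v}"
    by auto
  then have "card {x \<in> cells a. S x \<le> Suc v}
      = card {x \<in> cells a. S x \<le> v} + card {x \<in> cells a. S x = Suc v}"
    by (simp add: card_Un_disjoint disjoint_iff finite_cells)
  then show ?case
    using Suc sum_list_take_Suc[of v "wt a S"] nth_wt[of v a S] by (simp add: length_wt)
qed

lemma FSSF_filling: "S \<in> FSSF a \<Longrightarrow> filling a S"
  by (simp add: FSSF_def semi_skyline_def)

lemma FSSF_row_antimono: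
  assumes S: "S \<in> FSSF a" and "(r, c) \<in> cells a" "(r, c') \<in> cells a" "c \<le> c'"
  shows "S (r, c') \<le> S (r, c)"
proof -
  have "(r, c + d) \<in> cells a \<Longrightarrow> S (r, c + d) \<le> S (r, c)" for d
  proof (induction d)
    case (Suc d)
    then have "(r, c + d) \<in> cells a" using assms(2) by (auto simp: cells_def)
    with Suc S show ?case by (fastforce simp: FSSF_def semi_skyline_def)
  qed simp
  then show ?thesis using assms by (metis le_add_diff_inverse)
qed

lemma FSSF_entry_bounds:
  assumes S: "S \<in> FSSF a" and x: "x \<in> cells a"
  shows "1 \<le> S x" "S x \<le> fst x"
proof -
  show "1 \<le> S x" using FSSF_filling[OF S] x by (simp add: filling_def Suc_le_eq)
  obtain r c where rc: "x = (r, c)" by force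
  then have "(r, 1) \<in> cells a" "1 \<le> c" using x by (auto simp: cells_def)
  then have "S (r, c) \<le> S (r, 1)" using FSSF_row_antimono[OF S] x rc by blast
  also have "\<dots> \<le> r" using S \<open>(r, 1) \<in> cells a\<close> by (simp add: FSSF_def)
  finally show "S x \<le> fst x" using rc by simp
qed

lemma FSSF_mono_reading_index:
  assumes S: "S \<in> FSSF a" and x: "x \<in> cells a" and y: "y \<in> cells a"
    and le: "reading_index a x \<le> reading_index a y"
  shows "S x \<le> S y"
proof (cases "fst x = fst y")
  case True
  then have "snd y \<le> snd x"
    using le x y by (cases x, cases y) (auto simp: reading_index_def dest!: cellsD)
  then show ?thesis
    using FSSF_row_antimono[OF S, of "fst y" "snd y" "snd x"] x y True by (metis prod.collapse)
next
  case False
  have "reading_index a x \<le> sum_list (take (fst y) a)"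
    using le reading_index_le_iff[OF y, of "fst y"] by simp
  then have "fst x \<le> fst y" using reading_index_le_iff[OF x] by simp
  with False have "fst x < fst y" by simp
  then show ?thesis using S x y by (simp add: FSSF_def less_imp_le)
qed

lemma FSSF_le_iff:
  assumes S: "S \<in> FSSF a" and x: "x \<in> cells a"
  shows "S x \<le> v \<longleftrightarrow> reading_index a x \<le> sum_list (take v (wt a S))"
proof -
  define u where "u = min v (length a)"
  define L where "L = {y \<in> cells a. S y \<le> u}"
  have "S x \<le> length a" using FSSF_entry_bounds[OF S x] x by (cases x) (auto dest: cellsD)
  then have "S x \<le> v \<longleftrightarrow> x \<in> L" using x by (auto simp: L_def u_def)
  also have "L = {y \<in> cells a. reading_index a y \<le> card L}"
    by (rule reading_downset_eq)
      (auto simp: L_def intro: order_trans[OF FSSF_mono_reading_index[OF S]])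
  also have "card L = sum_list (take v (wt a S))"
    using sum_list_take_wt[OF FSSF_filling[OF S], of u]
    by (cases "v \<le> length a") (simp_all add: L_def u_def length_wt)
  finally show ?thesis using x by simp
qed

lemma sum_list_wt_FSSF:
  assumes S: "S \<in> FSSF a"
  shows "sum_list (wt a S) = sum_list a"
proof -
  have "{x \<in> cells a. S x \<le> length a} = cells a"
    using FSSF_entry_bounds(2)[OF S] by (fastforce dest: cellsD)
  then show ?thesis
    using sum_list_take_wt[OF FSSF_filling[OF S], of "length a"] card_cells
    by (simp add: length_wt)
qed

lemma dom_ge_wt_FSSF:
  assumes S: "S \<in> FSSF a"
  shows "dom_ge (wt a S) a"
  unfolding dom_ge_def
proof (intro allI impI)
  fix i assume "i \<le> length a"
  then have le_sum: "sum_list (take i a) \<le> sum_list a"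
    using sum_list_take_mono[of i "length a" a] by simp
  show "sum_list (take i a) \<le> sum_list (take i (wt a S))"
  proof (cases "sum_list (take i a) = 0")
    case False
    then have "sum_list (take i a) \<in> {1..sum_list a}"
      using le_sum by (intro atLeastAtMost_iff[THEN iffD2] conjI) linarith+
    then have "sum_list (take i a) \<in> reading_index a ` cells a"
      by (simp only: reading_index_image)
    then obtain x where x: "x \<in> cells a" "reading_index a x = sum_list (take i a)"
      by (metis imageE)
    then have "S x \<le> i"
      using FSSF_entry_bounds(2)[OF S x(1)] reading_index_le_iff[OF x(1), of i] by simp
    then show ?thesis using FSSF_le_iff[OF S x(1)] x(2) by simp
  qed (metis le0)
qed

text \<open>A row boundary \<open>z\<close> of \<open>a\<close> separates the boxes read at \<open>z\<close> and \<open>z + 1\<close>, which lie in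
  different rows and so carry different entries; \<open>z\<close> is then the partial sum of \<open>wt(S)\<close>
  up to the smaller entry.\<close>
lemma partial_sums_subset_wt_FSSF:
  assumes S: "S \<in> FSSF a"
  shows "partial_sums a \<subseteq> partial_sums (wt a S)"
proof
  fix z assume "z \<in> partial_sums a"
  then obtain i where z: "z = sum_list (take i a)" and i: "i \<le> length a"
    by (auto simp: partial_sums_iff)
  then have "z \<le> sum_list a" using sum_list_take_mono[of i "length a" a] by simp
  then consider "z = 0" | "z = sum_list a" | "0 < z \<and> z < sum_list a" by linarith
  then show "z \<in> partial_sums (wt a S)"
  proof cases
    case 1
    then show ?thesis by (simp add: zero_in_partial_sums)
  next
    case 2
    then show ?thesis using sum_list_in_partial_sums sum_list_wt_FSSF[OF S] by metis
  next
    case 3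
    have "z \<in> reading_index a ` cells a" "z + 1 \<in> reading_index a ` cells a"
      using 3 by (auto simp: reading_index_image)
    then obtain x y where x: "x \<in> cells a" "reading_index a x = z"
      and y: "y \<in> cells a" "reading_index a y = z + 1"
      by (metis imageE)
    have "fst x \<le> i" "\<not> fst y \<le> i"
      using reading_index_le_iff[OF x(1), of i] reading_index_le_iff[OF y(1), of i] x y z by simp_all
    then have "S x < S y" using S x(1) y(1) by (simp add: FSSF_def)
    then have "z = sum_list (take (S x) (wt a S))"
      using FSSF_le_iff[OF S x(1), of "S x"] FSSF_le_iff[OF S y(1), of "S x"] x y by simp
    then show ?thesis unfolding partial_sums_def by blast
  qed
qed

lemma wt_FSSF_in_slide_exps: "S \<in> FSSF a \<Longrightarrow> wt a S \<in> slide_exps a"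
  by (simp add: slide_exps_iff length_wt sum_list_wt_FSSF dom_ge_wt_FSSF
      partial_sums_subset_wt_FSSF)


subsection \<open>Every slide exponent is the weight of a filling in FSSF(a)\<close>

text \<open>Write \<open>b\<^sub>1\<close> ones, then \<open>b\<^sub>2\<close> twos, \<dots> into the boxes in reading order.\<close>
definition slide_filling :: "nat list \<Rightarrow> nat list \<Rightarrow> nat \<times> nat \<Rightarrow> nat" where
  "slide_filling a b x =
     (if x \<in> cells a then LEAST v. reading_index a x \<le> sum_list (take v b) else 0)"

lemma slide_filling_le_iff:
  assumes x: "x \<in> cells a" and sum: "sum_list a \<le> sum_list b"
  shows "slide_filling a b x \<le> v \<longleftrightarrow> reading_index a x \<le> sum_list (take v b)"
proof -
  let ?P = "\<lambda>v. reading_index a x \<le> sum_list (take v b)"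
  have "?P (length b)" using reading_index_range[OF x] sum by simp
  then have "?P (Least ?P)" by (rule LeastI)
  then show ?thesis
    using x Least_le[of ?P v] sum_list_take_mono[of "Least ?P" v b]
    by (auto simp: slide_filling_def)
qed

lemma filling_slide_filling:
  assumes "sum_list a \<le> sum_list b"
  shows "filling a (slide_filling a b)"
  using slide_filling_le_iff[OF _ assms, of _ 0] reading_index_range
  by (fastforce simp: filling_def slide_filling_def)

lemma FSSF_eq_slide_filling:
  assumes S: "S \<in> FSSF a"
  shows "S = slide_filling a (wt a S)"
proof
  fix x
  show "S x = slide_filling a (wt a S) x"
  proof (cases "x \<in> cells a")
    case True
    then have "S x \<le> v \<longleftrightarrow> slide_filling a (wt a S) x \<le> v" for v
      using FSSF_le_iff[OF S] slide_filling_le_iff sum_list_wt_FSSF[OF S] by simp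
    then show ?thesis by (meson le_antisym order_refl)
  next
    case False
    then show ?thesis using FSSF_filling[OF S] by (cases x) (simp add: filling_def slide_filling_def)
  qed
qed

lemma wt_slide_filling:
  assumes len: "length b = length a" and sum: "sum_list b = sum_list a"
  shows "wt a (slide_filling a b) = b"
proof -
  let ?S = "slide_filling a b"
  have le_iff: "x \<in> cells a \<Longrightarrow> ?S x \<le> v \<longleftrightarrow> reading_index a x \<le> sum_list (take v b)" for x v
    using slide_filling_le_iff sum by simp
  have "filling a ?S" using filling_slide_filling sum by simp
  show ?thesis
  proof (rule list_eq_if_sum_list_take_eq)
    fix v assume "v \<le> length (wt a ?S)"
    then have "sum_list (take v (wt a ?S)) = card {x \<in> cells a. ?S x \<le> v}"
      using sum_list_take_wt[OF \<open>filling a ?S\<close>] by (simp add: length_wt)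
    also have "\<dots> = card {x \<in> cells a. reading_index a x \<le> sum_list (take v b)}"
      using le_iff by (metis (no_types, lifting))
    also have "\<dots> = sum_list (take v b)"
      using \<open>v \<le> length (wt a ?S)\<close> sum_list_take_mono[of v "length b" b] len sum
      by (simp add: card_reading_index_le min_def length_wt)
    finally show "sum_list (take v (wt a ?S)) = sum_list (take v b)" .
  qed (simp add: length_wt len)
qed

text \<open>Once entries increase strictly from row to row, the remaining semi-skyline
  conditions hold automatically: in a triple of type A the box \<open>\<beta>\<close> lies above \<open>\<gamma>\<close>,
  in a triple of type B it lies below \<open>\<alpha>\<close>.\<close>
lemma FSSF_intro:
  assumes fill: "filling a S"
    and row: "\<And>r c. (r, c) \<in> cells a \<Longrightarrow> (r, c + 1) \<in> cells a \<Longrightarrow> S (r, c + 1) \<le> S (r, c)"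
    and strict: "\<And>B B'. B \<in> cells a \<Longrightarrow> B' \<in> cells a \<Longrightarrow> fst B' < fst B \<Longrightarrow> S B' < S B"
    and first: "\<And>r. (r, 1) \<in> cells a \<Longrightarrow> S (r, 1) \<le> r"
  shows "S \<in> FSSF a"
proof -
  have "S (r, c) \<noteq> S (s, c)" if "(r, c) \<in> cells a" "(s, c) \<in> cells a" "r \<noteq> s" for r s c
    using strict[of "(r, c)" "(s, c)"] strict[of "(s, c)" "(r, c)"] that by force
  moreover have "triples_ok a S"
    unfolding triples_ok_def inversion_triple_def
    using row strict[of "(_, _ + 1)" "(_, _)"] by (metis fst_conv)
  ultimately show ?thesis
    using fill row strict first by (simp add: FSSF_def semi_skyline_def)
qed

lemma slide_filling_in_FSSF:
  assumes b: "b \<in> slide_exps a"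
  shows "slide_filling a b \<in> FSSF a"
proof -
  let ?S = "slide_filling a b"
  have sum: "sum_list b = sum_list a" and dom: "dom_ge b a"
    and bounds: "partial_sums a \<subseteq> partial_sums b" and len: "length b = length a"
    using b by (simp_all add: slide_exps_iff)
  have le_iff: "x \<in> cells a \<Longrightarrow> ?S x \<le> v \<longleftrightarrow> reading_index a x \<le> sum_list (take v b)" for x v
    using slide_filling_le_iff sum by simp
  show ?thesis
  proof (rule FSSF_intro)
    show "filling a ?S" using filling_slide_filling sum by simp
  next
    fix r c assume "(r, c) \<in> cells a" "(r, c + 1) \<in> cells a"
    moreover have "reading_index a (r, c + 1) \<le> reading_index a (r, c)"
      by (simp add: reading_index_def)
    ultimately show "?S (r, c + 1) \<le> ?S (r, c)"
      using le_iff[of "(r, c)" "?S (r, c)"] le_iff[of "(r, c + 1)" "?S (r, c)"] by simp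
  next
    fix B B' assume B: "B \<in> cells a" and B': "B' \<in> cells a" and lt: "fst B' < fst B"
    obtain w where w: "sum_list (take (fst B') a) = sum_list (take w b)"
      using bounds unfolding partial_sums_def by blast
    then have "?S B' \<le> w" using le_iff[OF B', of w] reading_index_le_iff[OF B', of "fst B'"] by simp
    then have "sum_list (take (?S B') b) \<le> sum_list (take (fst B') a)"
      using w sum_list_take_mono by metis
    also have "\<dots> < reading_index a B"
      using reading_index_le_iff[OF B, of "fst B'"] lt by simp
    finally show "?S B' < ?S B" using le_iff[OF B, of "?S B'"] by simp
  next
    fix r assume r: "(r, 1) \<in> cells a"
    have "reading_index a (r, 1) \<le> sum_list (take r a)"
      using reading_index_le_iff[OF r] by simp
    also have "\<dots> \<le> sum_list (take r b)" using dom cellsD[OF r] by (simp add: dom_ge_def)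
    finally show "?S (r, 1) \<le> r" using le_iff[OF r] by simp
  qed
qed

lemma bij_betw_wt_FSSF: "bij_betw (wt a) (FSSF a) (slide_exps a)"
  unfolding bij_betw_def
proof
  show "inj_on (wt a) (FSSF a)" by (rule inj_onI) (metis FSSF_eq_slide_filling)
  show "wt a ` FSSF a = slide_exps a"
  proof (intro equalityI subsetI)
    fix b assume b: "b \<in> slide_exps a"
    then have "b = wt a (slide_filling a b)" using wt_slide_filling by (simp add: slide_exps_iff)
    then show "b \<in> wt a ` FSSF a" using slide_filling_in_FSSF[OF b] by blast
  qed (auto simp: wt_FSSF_in_slide_exps)
qed

theorem proposition2p9:
  fixes a :: "nat list"
  shows "finite (FSSF a) \<and> genfun (slide_exps a) id = genfun (FSSF a) (wt a)"
proof
  show "finite (FSSF a)"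
    using bij_betw_finite[OF bij_betw_wt_FSSF] finite_slide_exps by blast
  show "genfun (slide_exps a) id = genfun (FSSF a) (wt a)"
    by (rule genfun_bij_betw[OF bij_betw_wt_FSSF])
qed

end
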